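(* Let $f\colon\mathbb{R}^n\to\mathbb{R}$ be $f(x)=x^\top Ax+b^\top x+c$ with $A\in\mathbb{R}^{n\times n}$ symmetric, $b\in\mathbb{R}^n$, $c\in\mathbb{R}$. Then the approximately Gaussian replicator flow (AGRF) under $f$ is given by $$\dot m(t)=-2C(t)Am(t)-C(t)b,\qquad \dot C(t)=-2C(t)AC(t);$$ that is, for every $m\in\mathbb{R}^n$ and every symmetric positive semidefinite $C\in\mathbb{R}^{n\times n}$, the right-hand sides of the AGRF system evaluated at $(m,C)$ equal $-2CAm-Cb$ and $-2CAC$ respectively.
   Context: An approximately Gaussian replicator flow (AGRF) under $f$ is a solution $(m,C)\colon[0,\infty)\to\mathbb{R}^n\times\mathbb{R}^{n\times n}$ of the ODE system, for all $i,j\in\{1,\dots,n\}$, writing $\mathbb{E}$ for expectation over $x\sim\mathcal{N}(m(t),C(t))$ (Gaussian with mean $m(t)$, covariance $C(t)$): $$\dot m_i=m_i\,\mathbb{E}[f(x)]-\mathbb{E}[x_if(x)],$$ $$\dot C_{ij}=(C_{ij}-m_im_j)\mathbb{E}[f(x)]-\mathbb{E}[x_ix_jf(x)]+m_i\mathbb{E}[x_jf(x)]+m_j\mathbb{E}[x_if(x)].$$ *)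

theory Defs
  imports "HOL-Analysis.Analysis" "HOL-Probability.Probability"
begin

definition std_gaussian :: "(real^'n) measure" where
  "std_gaussian = density lborel (\<lambda>z. ennreal (\<Prod>i\<in>UNIV. std_normal_density (z $ i)))"

text \<open>Gaussian N(m,C): law of m + S z with z standard Gaussian and S S^T = C
  (for symmetric positive semidefinite C such S exists; the law does not depend on the choice).\<close>
definition gaussian :: "real^'n \<Rightarrow> real^'n^'n \<Rightarrow> (real^'n) measure" where
  "gaussian m C = distr std_gaussian borel
     (\<lambda>z. m + (SOME S :: real^'n^'n. S ** transpose S = C) *v z)"

definition gexp :: "real^'n \<Rightarrow> real^'n^'n \<Rightarrow> (real^'n \<Rightarrow> real) \<Rightarrow> real" where
  "gexp m C g = integral\<^sup>L (gaussian m C) g"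

definition agrf_m_rhs :: "(real^'n \<Rightarrow> real) \<Rightarrow> real^'n \<Rightarrow> real^'n^'n \<Rightarrow> real^'n" where
  "agrf_m_rhs f m C = (\<chi> i. m $ i * gexp m C f - gexp m C (\<lambda>x. x $ i * f x))"

definition agrf_C_rhs :: "(real^'n \<Rightarrow> real) \<Rightarrow> real^'n \<Rightarrow> real^'n^'n \<Rightarrow> real^'n^'n" where
  "agrf_C_rhs f m C = (\<chi> i j. (C $ i $ j - m $ i * m $ j) * gexp m C f
      - gexp m C (\<lambda>x. x $ i * x $ j * f x)
      + m $ i * gexp m C (\<lambda>x. x $ j * f x) + m $ j * gexp m C (\<lambda>x. x $ i * f x))"

definition psd :: "real^'n^'n \<Rightarrow> bool" where
  "psd C \<longleftrightarrow> transpose C = C \<and> (\<forall>v. 0 \<le> v \<bullet> (C *v v))"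

end

(* A Gaussian N(m, C) is the law of x = m + S z for a standard Gaussian vector z and any S with
   S S^T = C; for positive semidefinite C such an S exists, its rows being Gram vectors of C that are
   constructed one index at a time.  For quadratic f, f (m + S z) is a quadratic polynomial in z, so
   the expectations in the AGRF only involve the moments of z up to order four: odd moments vanish,
   E z_i z_j = delta_ij, and E z_i z_j z_k z_l = delta_ij delta_kl + delta_ik delta_jl + delta_il delta_jk
   (Isserlis).  With g = 2 A m + b this gives E[x_i f] = m_i E f + (C g)_i and
   E[x_i x_j f] = (m_i m_j + C_ij) E f + m_i (C g)_j + m_j (C g)_i + 2 (C A C)_ij,
   and in the AGRF right-hand sides everything cancels except - C g and - 2 C A C. *)

theory Submission
  imports Defs
begin

lemma symmetric_matrix_inner_commute:
  fixes M :: "real^'n::finite^'n"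
  assumes "transpose M = M"
  shows "v \<bullet> (M *v u) = u \<bullet> (M *v v)"
  by (metis assms dot_lmul_matrix inner_commute transpose_matrix_vector)

lemma axis_nth_eq: "axis i x $ j = (if j = i then x else 0)"
  by (simp add: axis_def)

lemma matrix_vector_mult_axis_nth: "((M::real^'n::finite^'m) *v axis j 1) $ i = M $ i $ j"
  by (simp add: matrix_vector_mult_basis column_def)

lemma matrix_vector_mult_nth_eq_inner:
  fixes S :: "real^'n::finite^'m::finite"
  shows "(S *v z) $ k = (axis k 1 v* S) \<bullet> z"
  by (simp add: dot_lmul_matrix inner_axis')

lemma matrix_vector_mult_vector_matrix_mult:
  fixes S :: "real^'n::finite^'m::finite"
  shows "S *v (v v* S) = (S ** transpose S) *v v"
  by (simp add: matrix_vector_mul_assoc flip: transpose_matrix_vector)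

lemma inner_vector_matrix_mult:
  fixes S :: "real^'n::finite^'m::finite"
  shows "(u v* S) \<bullet> (v v* S) = u \<bullet> ((S ** transpose S) *v v)"
  by (simp only: dot_lmul_matrix matrix_vector_mult_vector_matrix_mult)

lemma quadratic_form_congruence:
  fixes A :: "real^'m::finite^'m" and S :: "real^'n::finite^'m"
  shows "(S *v z) \<bullet> (A *v (S *v z)) = z \<bullet> ((transpose S ** A ** S) *v z)"
proof -
  have "(transpose S ** A ** S) *v z = (A *v (S *v z)) v* S"
    by (simp add: matrix_vector_mul_assoc[symmetric])
  then have "z \<bullet> ((transpose S ** A ** S) *v z) = (A *v (S *v z)) \<bullet> (S *v z)"
    by (simp add: dot_lmul_matrix inner_commute[of z])
  then show ?thesis
    by (simp only: inner_commute[of "A *v (S *v z)"])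
qed

lemma quadratic_shift:
  fixes A :: "real^'n::finite^'n"
  assumes "transpose A = A"
  shows "(m + y) \<bullet> (A *v (m + y)) + b \<bullet> (m + y) + c
    = (m \<bullet> (A *v m) + b \<bullet> m + c) + (2 *\<^sub>R (A *v m) + b) \<bullet> y + y \<bullet> (A *v y)"
proof -
  have sym: "m \<bullet> (A *v y) = y \<bullet> (A *v m)"
    by (rule symmetric_matrix_inner_commute[OF assms])
  have 1: "(m + y) \<bullet> (A *v (m + y)) = m \<bullet> (A *v m) + 2 * (y \<bullet> (A *v m)) + y \<bullet> (A *v y)"
    unfolding matrix_vector_right_distrib inner_add_left inner_add_right sym by simp
  have 2: "(2 *\<^sub>R (A *v m) + b) \<bullet> y = 2 * (y \<bullet> (A *v m)) + b \<bullet> y"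
    by (simp add: inner_add_left inner_commute[of "A *v m"])
  have 3: "b \<bullet> (m + y) = b \<bullet> m + b \<bullet> y"
    by (rule inner_add_right)
  show ?thesis
    unfolding 1 2 3 by simp
qed

lemma inner_restrict_left:
  fixes a w :: "real^'n::finite"
  shows "(\<chi> k. if k \<in> I then a $ k else 0) \<bullet> w = (\<Sum>k\<in>I. a $ k * w $ k)"
proof -
  have "(\<chi> k. if k \<in> I then a $ k else 0) \<bullet> w = (\<Sum>k\<in>UNIV. if k \<in> I then a $ k * w $ k else 0)"
    unfolding inner_vec_def by (intro sum.cong) auto
  then show ?thesis
    by (simp add: sum.inter_restrict[symmetric])
qed

lemma inner_restrict_right:
  fixes a w :: "real^'n::finite"
  shows "w \<bullet> (\<chi> k. if k \<in> I then a $ k else 0) = (\<Sum>k\<in>I. w $ k * a $ k)"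
  by (simp add: inner_commute[of w] inner_restrict_left mult.commute)

lemma orthogonal_ker_imp_range_representer:
  fixes R :: "'a::euclidean_space \<Rightarrow> 'b::euclidean_space"
  assumes "linear R" and "\<And>x. R x = 0 \<Longrightarrow> c \<bullet> x = 0"
  shows "\<exists>p\<in>range R. \<forall>x. p \<bullet> R x = c \<bullet> x"
proof -
  have "c \<in> (R -` {0})\<^sup>\<bottom>"
    using assms(2) by (auto simp: orthogonal_comp_def orthogonal_def inner_commute)
  also have "\<dots> = range (adjoint R)"
    using assms(1) by (simp add: ker_orthogonal_comp_adjoint orthogonal_comp_self
        adjoint_linear linear_subspace_image)
  finally obtain u where u: "c = adjoint R u"
    by auto
  obtain p q where "p \<in> span (range R)" and q: "\<And>w. w \<in> span (range R) \<Longrightarrow> orthogonal q w"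
    and "u = p + q"
    using orthogonal_subspace_decomp_exists by blast
  have "span (range R) = range R"
    using assms(1) by (simp add: linear_subspace_image)
  with \<open>p \<in> span (range R)\<close> have "p \<in> range R"
    by simp
  moreover have "p \<bullet> R x = c \<bullet> x" for x
  proof -
    have "q \<bullet> R x = 0"
      using q[of "R x"] by (simp add: orthogonal_def span_base)
    then have "p \<bullet> R x = u \<bullet> R x"
      by (simp add: \<open>u = p + q\<close> inner_add_left)
    also have "\<dots> = c \<bullet> x"
      using adjoint_works[OF assms(1), of x u] by (simp add: u inner_commute)
    finally show ?thesis .
  qed
  ultimately show ?thesis
    by blast
qed

lemma exists_nonzero_orthogonal_family:
  fixes r :: "'i \<Rightarrow> 'a::euclidean_space"
  assumes "finite I" and "card I < DIM('a)"
  shows "\<exists>z. z \<noteq> 0 \<and> (\<forall>i\<in>I. z \<bullet> r i = 0)"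
proof -
  have "dim (r ` I) \<le> card (r ` I)"
    using assms(1) by (intro dim_le_card) (auto intro: span_base)
  also have "\<dots> \<le> card I"
    using assms(1) by (rule card_image_le)
  finally have "dim (r ` I) < DIM('a)"
    using assms(2) by linarith
  then obtain z where "z \<noteq> 0" and "\<And>y. y \<in> span (r ` I) \<Longrightarrow> orthogonal z y"
    using orthogonal_to_subspace_exists by blast
  then show ?thesis
    by (auto simp: orthogonal_def span_base)
qed

section \<open>Gram factorisation of positive semidefinite matrices\<close>

lemma psd_nth_commute:
  assumes "psd C"
  shows "C $ i $ j = C $ j $ i"
proof -
  have "C $ j $ i = transpose C $ i $ j"
    by (simp add: transpose_def)
  with assms show ?thesis
    by (simp add: psd_def)
qed

lemma psd_form_eq_0_imp_mult_eq_0: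
  fixes C :: "real^'n::finite^'n"
  assumes "psd C" and "w \<bullet> (C *v w) = 0"
  shows "C *v w = 0"
proof (rule ccontr)
  define v where "v = C *v w"
  assume "C *v w \<noteq> 0"
  then have "0 < v \<bullet> v"
    by (simp add: v_def)
  have form: "(w - t *\<^sub>R v) \<bullet> (C *v (w - t *\<^sub>R v)) = t * (t * (v \<bullet> (C *v v)) - 2 * (v \<bullet> v))" for t
    using assms symmetric_matrix_inner_commute[of C w v]
    by (simp add: psd_def v_def matrix_vector_mult_diff_distrib matrix_vector_mult_scaleR
        inner_diff_left inner_diff_right algebra_simps)
  \<comment> \<open>The form is negative at a small step from \<open>w\<close> in the direction \<open>- C w\<close>.\<close>
  define t where "t = (v \<bullet> v) / (v \<bullet> (C *v v) + 1)"
  have "0 \<le> v \<bullet> (C *v v)"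
    using assms(1) by (simp add: psd_def)
  then have "0 < t" and "t * (v \<bullet> (C *v v)) < v \<bullet> v"
    using \<open>0 < v \<bullet> v\<close> by (auto simp: t_def field_simps)
  then have "t * (v \<bullet> (C *v v)) - 2 * (v \<bullet> v) < 0"
    using \<open>0 < v \<bullet> v\<close> by linarith
  with \<open>0 < t\<close> have "(w - t *\<^sub>R v) \<bullet> (C *v (w - t *\<^sub>R v)) < 0"
    unfolding form by (rule mult_pos_neg)
  with assms(1) show False
    by (simp add: psd_def not_le[symmetric])
qed

lemma psd_gram_combination_inner:
  fixes C :: "real^'n::finite^'n" and r :: "'n \<Rightarrow> real^'m::finite"
  assumes gram: "\<And>i j. i \<in> I \<Longrightarrow> j \<in> I \<Longrightarrow> r i \<bullet> r j = C $ i $ j"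
  shows "(\<Sum>j\<in>I. a $ j *\<^sub>R r j) \<bullet> (\<Sum>j\<in>I. b $ j *\<^sub>R r j)
    = (\<chi> k. if k \<in> I then a $ k else 0) \<bullet> (C *v (\<chi> k. if k \<in> I then b $ k else 0))"
  by (simp add: inner_restrict_left inner_restrict_right matrix_vector_mul_component
      inner_sum_left inner_sum_right sum_distrib_left gram mult_ac)
    (rule sum.swap)

lemma psd_gram_vectors_extend_inner:
  fixes C :: "real^'n::finite^'n" and r :: "'n \<Rightarrow> real^'m::finite"
  assumes "psd C" and gram: "\<And>i j. i \<in> I \<Longrightarrow> j \<in> I \<Longrightarrow> r i \<bullet> r j = C $ i $ j"
  shows "\<exists>a. \<forall>j\<in>I. (\<Sum>k\<in>I. a $ k *\<^sub>R r k) \<bullet> r j = C $ i0 $ j"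
proof -
  define R where "R a = (\<Sum>k\<in>I. a $ k *\<^sub>R r k)" for a
  define P where "P a = (\<chi> k. if k \<in> I then a $ k else 0)" for a :: "real^'n"
  have "linear R"
    by (auto simp: R_def intro!: linearI simp: scaleR_add_left sum.distrib scaleR_sum_right)
  \<comment> \<open>The system \<open>R a \<bullet> r j = C $ i0 $ j\<close> is solvable because its right-hand side vanishes on the kernel of \<open>R\<close>.\<close>
  moreover have "P (C $ i0) \<bullet> a = 0" if "R a = 0" for a
  proof -
    have "P a \<bullet> (C *v P a) = 0"
      using psd_gram_combination_inner[where I=I and r=r and C=C, OF gram, where a=a and b=a] that
      by (simp add: R_def P_def)
    then have "C *v P a = 0"
      by (rule psd_form_eq_0_imp_mult_eq_0[OF assms(1)])
    then show ?thesis
      by (simp add: P_def inner_restrict_left inner_restrict_right vec_eq_iff matrix_vector_mul_component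
          mult.commute)
  qed
  ultimately obtain a where a: "\<forall>x. R a \<bullet> R x = P (C $ i0) \<bullet> x"
    using orthogonal_ker_imp_range_representer by blast
  have "R a \<bullet> r j = C $ i0 $ j" if "j \<in> I" for j
  proof -
    have "R (axis j 1) = (\<Sum>k\<in>I. if k = j then r k else 0)"
      unfolding R_def by (intro sum.cong) (auto simp: axis_def)
    with that have "r j = R (axis j 1)"
      by simp
    with a that show ?thesis
      by (simp add: P_def inner_axis)
  qed
  then show ?thesis
    unfolding R_def by blast
qed

lemma psd_gram_vectors_extend_norm:
  fixes C :: "real^'n::finite^'n" and r :: "'n \<Rightarrow> real^'m::finite"
  assumes "psd C" and gram: "\<And>i j. i \<in> I \<Longrightarrow> j \<in> I \<Longrightarrow> r i \<bullet> r j = C $ i $ j"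
    and p: "\<And>j. j \<in> I \<Longrightarrow> (\<Sum>k\<in>I. a $ k *\<^sub>R r k) \<bullet> r j = C $ i0 $ j"
  shows "(\<Sum>k\<in>I. a $ k *\<^sub>R r k) \<bullet> (\<Sum>k\<in>I. a $ k *\<^sub>R r k) \<le> C $ i0 $ i0"
proof -
  define p where "p = (\<Sum>k\<in>I. a $ k *\<^sub>R r k)"
  define P where "P = (\<chi> k. if k \<in> I then a $ k else 0)"
  have pp: "p \<bullet> p = P \<bullet> (C *v P)"
    using psd_gram_combination_inner[where I=I and r=r and C=C, OF gram, where a=a and b=a]
    by (simp add: p_def P_def)
  have "P \<bullet> (C *v axis i0 1) = (\<Sum>k\<in>I. a $ k * C $ k $ i0)"
    by (simp add: P_def inner_restrict_left matrix_vector_mult_basis column_def)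
  also have "\<dots> = (\<Sum>k\<in>I. a $ k * (p \<bullet> r k))"
    using p by (simp add: p_def psd_nth_commute[OF assms(1)])
  also have "\<dots> = p \<bullet> (\<Sum>k\<in>I. a $ k *\<^sub>R r k)"
    by (simp add: inner_sum_right)
  also have "\<dots> = p \<bullet> p"
    by (simp add: p_def)
  finally have cross: "P \<bullet> (C *v axis i0 1) = p \<bullet> p" .
  have "0 \<le> (axis i0 1 - P) \<bullet> (C *v (axis i0 1 - P))"
    using assms(1) by (simp add: psd_def)
  also have "\<dots> = C $ i0 $ i0 - p \<bullet> p"
    using cross pp symmetric_matrix_inner_commute[of C P "axis i0 1"] assms(1)
    by (simp add: psd_def matrix_vector_mult_diff_distrib inner_diff_left inner_diff_right inner_axis'
        matrix_vector_mult_basis column_def)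
  finally show ?thesis
    by (simp add: p_def)
qed

lemma psd_gram_vectors_insert:
  fixes C :: "real^'n::finite^'n" and r :: "'n \<Rightarrow> real^'n"
  assumes "psd C" and "i0 \<notin> I" and gram: "\<And>i j. i \<in> I \<Longrightarrow> j \<in> I \<Longrightarrow> r i \<bullet> r j = C $ i $ j"
  shows "\<exists>r' :: 'n \<Rightarrow> real^'n. \<forall>i\<in>insert i0 I. \<forall>j\<in>insert i0 I. r' i \<bullet> r' j = C $ i $ j"
proof -
  obtain a where "\<forall>j\<in>I. (\<Sum>k\<in>I. a $ k *\<^sub>R r k) \<bullet> r j = C $ i0 $ j"
    using psd_gram_vectors_extend_inner[OF assms(1) gram] by blast
  moreover define p where "p = (\<Sum>k\<in>I. a $ k *\<^sub>R r k)"
  ultimately have p: "p \<bullet> r j = C $ i0 $ j" if "j \<in> I" for j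
    using that by simp
  have "p \<bullet> p \<le> C $ i0 $ i0"
    using psd_gram_vectors_extend_norm[OF assms(1) gram] p by (simp add: p_def)
  have "card I < CARD('n)"
    using \<open>i0 \<notin> I\<close> by (intro psubset_card_mono) auto
  then obtain z where "z \<noteq> 0" and zr: "\<And>j. j \<in> I \<Longrightarrow> z \<bullet> r j = 0"
    using exists_nonzero_orthogonal_family[of I r] by fastforce
  then have "z \<bullet> p = 0"
    by (simp add: p_def inner_sum_right)
  \<comment> \<open>The new Gram vector is \<open>p + t z\<close>: \<open>z\<close> is orthogonal to every \<open>r j\<close>, and \<open>t\<close> fixes the squared norm.\<close>
  define t where "t = sqrt (C $ i0 $ i0 - p \<bullet> p) / norm z"
  have "t * t * (z \<bullet> z) = C $ i0 $ i0 - p \<bullet> p"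
    using \<open>z \<noteq> 0\<close> \<open>p \<bullet> p \<le> C $ i0 $ i0\<close>
    by (simp add: t_def power2_norm_eq_inner[symmetric] field_simps flip: power2_eq_square)
  then have "(p + t *\<^sub>R z) \<bullet> (p + t *\<^sub>R z) = C $ i0 $ i0"
    using \<open>z \<bullet> p = 0\<close> by (simp add: inner_add_left inner_add_right inner_commute algebra_simps)
  moreover have "(p + t *\<^sub>R z) \<bullet> r j = C $ i0 $ j" if "j \<in> I" for j
    using that p zr by (simp add: inner_add_left)
  ultimately have "\<forall>i\<in>insert i0 I. \<forall>j\<in>insert i0 I. (r(i0 := p + t *\<^sub>R z)) i \<bullet> (r(i0 := p + t *\<^sub>R z)) j = C $ i $ j"
    using \<open>i0 \<notin> I\<close> gram psd_nth_commute[OF assms(1)] by (auto simp: inner_commute)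
  then show ?thesis
    by (rule exI[of _ "r(i0 := p + t *\<^sub>R z)"])
qed

lemma psd_imp_gram_factorization:
  fixes C :: "real^'n::finite^'n"
  assumes "psd C"
  shows "\<exists>S :: real^'n^'n. S ** transpose S = C"
proof -
  have "\<exists>r::'n \<Rightarrow> real^'n. \<forall>i\<in>I. \<forall>j\<in>I. r i \<bullet> r j = C $ i $ j" for I
  proof (induction I rule: finite_induct[OF finite])
    case (2 i0 I)
    then show ?case
      using psd_gram_vectors_insert[OF assms] by blast
  qed simp
  from this[of UNIV] obtain r :: "'n \<Rightarrow> real^'n" where "\<forall>i\<in>UNIV. \<forall>j\<in>UNIV. r i \<bullet> r j = C $ i $ j" ..
  then have "(\<chi> i. r i) ** transpose (\<chi> i. r i) = C"
    by (simp add: vec_eq_iff matrix_matrix_mult_def transpose_def inner_vec_def)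
  then show ?thesis
    by (rule exI)
qed

section \<open>Moments of the standard Gaussian measure\<close>

lemma has_bochner_integral_std_gaussian_prod:
  fixes g :: "'n::finite \<Rightarrow> real \<Rightarrow> real"
  assumes [measurable]: "\<And>i. g i \<in> borel_measurable borel"
    and g: "\<And>i. has_bochner_integral lborel (\<lambda>t. std_normal_density t * g i t) (I i)"
  shows "has_bochner_integral std_gaussian (\<lambda>z::real^'n. \<Prod>i\<in>UNIV. g i (z $ i)) (\<Prod>i\<in>UNIV. I i)"
proof -
  interpret product_sigma_finite "\<lambda>_::real^'n. lborel :: real measure"
    by (simp add: product_sigma_finite_def lborel.sigma_finite_measure_axioms)
  define e :: "'n \<Rightarrow> real^'n" where "e i = axis i 1" for i
  have "inj e"
    by (simp add: e_def inj_on_def axis_eq_axis)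
  have Basis_e: "Basis = range e"
    by (auto simp: e_def Basis_vec_def)
  \<comment> \<open>Fubini for the product of copies of \<open>lborel\<close> indexed by \<open>Basis\<close>, whose image under
    \<open>\<lambda>x. \<Sum>b\<in>Basis. x b *\<^sub>R b\<close> is \<open>lborel\<close> on \<open>real^'n\<close> (\<open>lborel_eq\<close>); \<open>e\<close> matches \<open>Basis\<close> with the coordinates.\<close>
  define h where "h b = (\<lambda>t. std_normal_density t * g (inv e b) t)" for b
  have h: "has_bochner_integral lborel (h b) (I (inv e b))" for b
    using g[of "inv e b"] by (simp add: h_def)
  have "has_bochner_integral (\<Pi>\<^sub>M b\<in>Basis. lborel) (\<lambda>x. \<Prod>b\<in>Basis. h b (x b)) (\<Prod>b\<in>Basis. I (inv e b))"
    using h by (simp add: has_bochner_integral_iff product_integrable_prod product_integral_prod)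
  moreover have "(\<Prod>b\<in>Basis. h b (x b)) =
      (\<Prod>i\<in>UNIV. std_normal_density ((\<Sum>b\<in>Basis. x b *\<^sub>R b) $ i)) * (\<Prod>i\<in>UNIV. g i ((\<Sum>b\<in>Basis. x b *\<^sub>R b) $ i))"
    for x
  proof -
    have "(\<Sum>b\<in>Basis. x b *\<^sub>R b) $ i = x (e i)" for i
    proof -
      have "(\<Sum>b\<in>Basis. x b *\<^sub>R b) $ i = (\<Sum>k\<in>UNIV. x (e k) * e k $ i)"
        by (simp add: Basis_e sum.reindex[OF \<open>inj e\<close>] sum_component)
      also have "\<dots> = (\<Sum>k\<in>UNIV. if k = i then x (e i) else 0)"
        by (intro sum.cong) (auto simp: e_def axis_nth_eq)
      finally show ?thesis
        by simp
    qed
    then show ?thesis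
      by (simp add: Basis_e prod.reindex[OF \<open>inj e\<close>] inv_f_f[OF \<open>inj e\<close>] h_def prod.distrib)
  qed
  moreover have "(\<Prod>b\<in>Basis. I (inv e b)) = (\<Prod>i\<in>UNIV. I i)"
    by (simp add: Basis_e prod.reindex[OF \<open>inj e\<close>] inv_f_f[OF \<open>inj e\<close>])
  ultimately have "has_bochner_integral lborel
      (\<lambda>z::real^'n. (\<Prod>i\<in>UNIV. std_normal_density (z $ i)) * (\<Prod>i\<in>UNIV. g i (z $ i))) (\<Prod>i\<in>UNIV. I i)"
    by (subst lborel_eq) (intro has_bochner_integral_distr; simp)
  then show ?thesis
    unfolding std_gaussian_def
    by (intro has_bochner_integral_density) (auto intro!: prod_nonneg simp: normal_density_nonneg)
qed

definition gaussian_moment :: "nat \<Rightarrow> real" where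
  "gaussian_moment k = (if even k then fact k / (2 ^ (k div 2) * fact (k div 2)) else 0)"

lemma gaussian_moment_0_to_4:
  "gaussian_moment 0 = 1" "gaussian_moment (Suc 0) = 0" "gaussian_moment (Suc (Suc 0)) = 1"
  "gaussian_moment (Suc (Suc (Suc 0))) = 0" "gaussian_moment (Suc (Suc (Suc (Suc 0)))) = 3"
  by (simp_all add: gaussian_moment_def)

lemma has_bochner_integral_std_normal_power:
  "has_bochner_integral lborel (\<lambda>t. std_normal_density t * t ^ k) (gaussian_moment k)"
proof (cases "even k")
  case True
  then obtain j where "k = 2 * j" by (elim evenE)
  then show ?thesis using std_normal_moment_even[of j] by (simp add: gaussian_moment_def)
next
  case False
  then obtain j where "k = 2 * j + 1" by (elim oddE)
  then show ?thesis using std_normal_moment_odd[of j] by (simp add: gaussian_moment_def)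
qed

lemma prod_list_nth_eq_prod_power:
  fixes z :: "'a::comm_monoid_mult^'n::finite"
  shows "(\<Prod>i\<leftarrow>is. z $ i) = (\<Prod>b\<in>UNIV. z $ b ^ count_list is b)"
proof (induction "is")
  case (Cons i "is")
  have "(\<Prod>b\<in>UNIV. z $ b ^ count_list (i # is) b) = (\<Prod>b\<in>UNIV. (if b = i then z $ b else 1) * z $ b ^ count_list is b)"
    by (intro prod.cong) auto
  also have "\<dots> = z $ i * (\<Prod>b\<in>UNIV. z $ b ^ count_list is b)"
    by (simp add: prod.distrib)
  finally show ?case
    by (simp add: Cons.IH)
qed simp

lemma has_bochner_integral_std_gaussian_monomial:
  "has_bochner_integral std_gaussian (\<lambda>z::real^'n::finite. \<Prod>i\<leftarrow>is. z $ i)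
     (\<Prod>b\<in>set is. gaussian_moment (count_list is b))"
proof -
  have "(\<Prod>b\<in>UNIV. gaussian_moment (count_list is b)) = (\<Prod>b\<in>set is. gaussian_moment (count_list is b))"
    by (rule prod.mono_neutral_right) (auto simp: count_list_0_iff gaussian_moment_0_to_4)
  then show ?thesis
    unfolding prod_list_nth_eq_prod_power
    using has_bochner_integral_std_gaussian_prod[of "\<lambda>i t. t ^ count_list is i" "\<lambda>i. gaussian_moment (count_list is i)"]
    by (simp add: has_bochner_integral_std_normal_power)
qed

lemma std_gaussian_coordinate_moments:
  fixes i j k l :: "'n::finite"
  shows "has_bochner_integral std_gaussian (\<lambda>z::real^'n. 1::real) 1"
    and "has_bochner_integral std_gaussian (\<lambda>z::real^'n. z $ i) 0"
    and "has_bochner_integral std_gaussian (\<lambda>z::real^'n. z $ i * z $ j) (if i = j then 1 else 0)"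
    and "has_bochner_integral std_gaussian (\<lambda>z::real^'n. z $ i * (z $ j * z $ k)) 0"
    and "has_bochner_integral std_gaussian (\<lambda>z::real^'n. z $ i * (z $ j * (z $ k * z $ l)))
      ((if i = j then 1 else 0) * (if k = l then 1 else 0) + (if i = k then 1 else 0) * (if j = l then 1 else 0)
        + (if i = l then 1 else 0) * (if j = k then 1 else 0))"
proof -
  note monomial = has_bochner_integral_std_gaussian_monomial
  show "has_bochner_integral std_gaussian (\<lambda>z::real^'n. 1::real) 1"
    using monomial[of "[] :: 'n list"] by simp
  show "has_bochner_integral std_gaussian (\<lambda>z::real^'n. z $ i) 0"
    using monomial[of "[i]"] by (simp add: gaussian_moment_0_to_4)
  show "has_bochner_integral std_gaussian (\<lambda>z::real^'n. z $ i * z $ j) (if i = j then 1 else 0)"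
    using monomial[of "[i, j]"] by (cases "i = j") (simp_all add: gaussian_moment_0_to_4)
  show "has_bochner_integral std_gaussian (\<lambda>z::real^'n. z $ i * (z $ j * z $ k)) 0"
    using monomial[of "[i, j, k]"]
    by (cases "i = j"; cases "i = k"; cases "j = k"; simp add: gaussian_moment_0_to_4 insert_commute)
  show "has_bochner_integral std_gaussian (\<lambda>z::real^'n. z $ i * (z $ j * (z $ k * z $ l)))
      ((if i = j then 1 else 0) * (if k = l then 1 else 0) + (if i = k then 1 else 0) * (if j = l then 1 else 0)
        + (if i = l then 1 else 0) * (if j = k then 1 else 0))"
    using monomial[of "[i, j, k, l]"]
    by (cases "i = j"; cases "i = k"; cases "i = l"; cases "j = k"; cases "j = l"; cases "k = l";
        simp add: gaussian_moment_0_to_4 insert_commute)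
qed

lemma has_bochner_integral_inner_mult:
  fixes F :: "real^'n::finite \<Rightarrow> real"
  assumes "\<And>i. has_bochner_integral M (\<lambda>z. z $ i * F z) (w $ i)"
  shows "has_bochner_integral M (\<lambda>z. (a \<bullet> z) * F z) (a \<bullet> w)"
proof -
  have "has_bochner_integral M (\<lambda>z. \<Sum>i\<in>UNIV. a $ i * (z $ i * F z)) (\<Sum>i\<in>UNIV. a $ i * w $ i)"
    using assms by (intro has_bochner_integral_sum has_bochner_integral_mult_right)
  then show ?thesis
    by (simp add: inner_vec_def sum_distrib_right mult.assoc)
qed

lemma has_bochner_integral_std_gaussian_inner1:
  fixes a :: "real^'n::finite"
  shows "has_bochner_integral std_gaussian (\<lambda>z. a \<bullet> z) 0"
proof -
  have "has_bochner_integral std_gaussian (\<lambda>z. (a \<bullet> z) * 1) (a \<bullet> 0)"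
    by (rule has_bochner_integral_inner_mult) (simp add: std_gaussian_coordinate_moments(2))
  then show ?thesis
    by simp
qed

lemma has_bochner_integral_std_gaussian_inner2:
  fixes a b :: "real^'n::finite"
  shows "has_bochner_integral std_gaussian (\<lambda>z. (a \<bullet> z) * (b \<bullet> z)) (a \<bullet> b)"
proof -
  define P where "P a b = (\<lambda>z. (a \<bullet> z) * (b \<bullet> z))" for a b :: "real^'n"
  \<comment> \<open>Linearity in the first factor followed by a rotation of the factors replaces one coordinate
    vector by an arbitrary vector; starting from the coordinate moments, each argument is freed in turn.\<close>
  have step: "has_bochner_integral std_gaussian (P b a) (b \<bullet> a)"
    if "\<And>i. has_bochner_integral std_gaussian (P (axis i 1) b) (axis i 1 \<bullet> b)" for a b
  proof -
    have "has_bochner_integral std_gaussian (\<lambda>z. z $ i * (b \<bullet> z)) (b $ i)" for i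
      using that[of i] by (simp add: P_def inner_axis')
    then have "has_bochner_integral std_gaussian (\<lambda>z. (a \<bullet> z) * (b \<bullet> z)) (a \<bullet> b)"
      by (rule has_bochner_integral_inner_mult)
    then show ?thesis
      by (simp add: P_def mult.commute inner_commute)
  qed
  have "has_bochner_integral std_gaussian (P (axis j 1) (axis i 1)) (axis j 1 \<bullet> axis i (1::real))" for i j
    using std_gaussian_coordinate_moments(3)[of j i] by (simp add: P_def inner_axis' axis_nth_eq)
  then have "has_bochner_integral std_gaussian (P (axis i 1) a) (axis i 1 \<bullet> a)" for i a
    by (rule step)
  then have "has_bochner_integral std_gaussian (P a b) (a \<bullet> b)"
    by (rule step)
  then show ?thesis
    by (simp add: P_def)
qed

lemma has_bochner_integral_std_gaussian_inner3:
  fixes a b c :: "real^'n::finite"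
  shows "has_bochner_integral std_gaussian (\<lambda>z. (a \<bullet> z) * ((b \<bullet> z) * (c \<bullet> z))) 0"
proof -
  define P where "P a b c = (\<lambda>z. (a \<bullet> z) * ((b \<bullet> z) * (c \<bullet> z)))" for a b c :: "real^'n"
  have step: "has_bochner_integral std_gaussian (P b c a) 0"
    if "\<And>i. has_bochner_integral std_gaussian (P (axis i 1) b c) 0" for a b c
  proof -
    have "has_bochner_integral std_gaussian (\<lambda>z. z $ i * ((b \<bullet> z) * (c \<bullet> z))) (0 $ i)" for i
      using that[of i] by (simp add: P_def inner_axis')
    then have "has_bochner_integral std_gaussian (\<lambda>z. (a \<bullet> z) * ((b \<bullet> z) * (c \<bullet> z))) (a \<bullet> 0)"
      by (rule has_bochner_integral_inner_mult)
    then show ?thesis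
      by (simp add: P_def mult_ac)
  qed
  have "has_bochner_integral std_gaussian (P (axis k 1) (axis j 1) (axis i 1)) 0" for i j k
    using std_gaussian_coordinate_moments(4)[of k j i] by (simp add: P_def inner_axis')
  then have "has_bochner_integral std_gaussian (P (axis j 1) (axis i 1) a) 0" for i j a
    by (rule step)
  then have "has_bochner_integral std_gaussian (P (axis i 1) a b) 0" for i a b
    by (rule step)
  then have "has_bochner_integral std_gaussian (P a b c) 0"
    by (rule step)
  then show ?thesis
    by (simp add: P_def)
qed

lemma has_bochner_integral_std_gaussian_inner4:
  fixes a b c d :: "real^'n::finite"
  shows "has_bochner_integral std_gaussian (\<lambda>z. (a \<bullet> z) * ((b \<bullet> z) * ((c \<bullet> z) * (d \<bullet> z))))
    ((a \<bullet> b) * (c \<bullet> d) + (a \<bullet> c) * (b \<bullet> d) + (a \<bullet> d) * (b \<bullet> c))"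
proof -
  define P where "P a b c d = (\<lambda>z. (a \<bullet> z) * ((b \<bullet> z) * ((c \<bullet> z) * (d \<bullet> z))))" for a b c d :: "real^'n"
  define T where "T a b c d = (a \<bullet> b) * (c \<bullet> d) + (a \<bullet> c) * (b \<bullet> d) + (a \<bullet> d) * (b \<bullet> c)"
    for a b c d :: "real^'n"
  have step: "has_bochner_integral std_gaussian (P b c d a) (T b c d a)"
    if "\<And>i. has_bochner_integral std_gaussian (P (axis i 1) b c d) (T (axis i 1) b c d)" for a b c d
  proof -
    define w where "w = (c \<bullet> d) *\<^sub>R b + (b \<bullet> d) *\<^sub>R c + (b \<bullet> c) *\<^sub>R d"
    have "has_bochner_integral std_gaussian (\<lambda>z. z $ i * ((b \<bullet> z) * ((c \<bullet> z) * (d \<bullet> z)))) (w $ i)" for i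
      using that[of i] by (simp add: P_def T_def w_def inner_axis' mult_ac)
    then have "has_bochner_integral std_gaussian (P a b c d) (a \<bullet> w)"
      unfolding P_def by (rule has_bochner_integral_inner_mult)
    then show ?thesis
      by (simp add: P_def T_def w_def inner_add_right inner_commute ac_simps)
  qed
  have "has_bochner_integral std_gaussian (P (axis l 1) (axis k 1) (axis j 1) (axis i 1))
      (T (axis l 1) (axis k 1) (axis j 1) (axis i 1))" for i j k l
    using std_gaussian_coordinate_moments(5)[of l k j i] by (simp add: P_def T_def inner_axis' axis_nth_eq)
  then have "has_bochner_integral std_gaussian (P (axis k 1) (axis j 1) (axis i 1) a) (T (axis k 1) (axis j 1) (axis i 1) a)"
    for i j k a
    by (rule step)
  then have "has_bochner_integral std_gaussian (P (axis j 1) (axis i 1) a b) (T (axis j 1) (axis i 1) a b)" for i j a b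
    by (rule step)
  then have "has_bochner_integral std_gaussian (P (axis i 1) a b c) (T (axis i 1) a b c)" for i a b c
    by (rule step)
  then have "has_bochner_integral std_gaussian (P a b c d) (T a b c d)"
    by (rule step)
  then show ?thesis
    by (simp add: P_def T_def)
qed

lemma quadratic_form_eq_sum:
  fixes M :: "real^'n::finite^'n"
  shows "z \<bullet> (M *v z) = (\<Sum>k\<in>UNIV. (axis k 1 \<bullet> z) * (M $ k \<bullet> z))"
  by (simp add: inner_vec_def[of z "M *v z"] matrix_vector_mul_component inner_axis')

lemma has_bochner_integral_std_gaussian_quadratic_form:
  fixes M :: "real^'n::finite^'n" and a b :: "real^'n"
  shows "has_bochner_integral std_gaussian (\<lambda>z. z \<bullet> (M *v z)) (trace M)"
    and "has_bochner_integral std_gaussian (\<lambda>z. (a \<bullet> z) * (z \<bullet> (M *v z))) 0"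
    and "has_bochner_integral std_gaussian (\<lambda>z. (a \<bullet> z) * ((b \<bullet> z) * (z \<bullet> (M *v z))))
      ((a \<bullet> b) * trace M + a \<bullet> (M *v b) + b \<bullet> (M *v a))"
proof -
  have "has_bochner_integral std_gaussian (\<lambda>z. \<Sum>k\<in>UNIV. (axis k 1 \<bullet> z) * (M $ k \<bullet> z))
      (\<Sum>k\<in>UNIV. axis k 1 \<bullet> M $ k)"
    by (intro has_bochner_integral_sum has_bochner_integral_std_gaussian_inner2)
  then show "has_bochner_integral std_gaussian (\<lambda>z. z \<bullet> (M *v z)) (trace M)"
    by (simp add: quadratic_form_eq_sum inner_axis' trace_def)
  have "has_bochner_integral std_gaussian (\<lambda>z. \<Sum>k\<in>UNIV. (a \<bullet> z) * ((axis k 1 \<bullet> z) * (M $ k \<bullet> z)))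
      (\<Sum>k\<in>(UNIV :: 'n set). 0)"
    by (intro has_bochner_integral_sum has_bochner_integral_std_gaussian_inner3)
  then show "has_bochner_integral std_gaussian (\<lambda>z. (a \<bullet> z) * (z \<bullet> (M *v z))) 0"
    by (simp add: quadratic_form_eq_sum sum_distrib_left)
  have "has_bochner_integral std_gaussian
      (\<lambda>z. \<Sum>k\<in>UNIV. (a \<bullet> z) * ((b \<bullet> z) * ((axis k 1 \<bullet> z) * (M $ k \<bullet> z))))
      (\<Sum>k\<in>UNIV. (a \<bullet> b) * (axis k 1 \<bullet> M $ k) + (a \<bullet> axis k 1) * (b \<bullet> M $ k)
        + (a \<bullet> M $ k) * (b \<bullet> axis k 1))"
    by (intro has_bochner_integral_sum has_bochner_integral_std_gaussian_inner4)
  moreover have "a \<bullet> (M *v b) = (\<Sum>k\<in>UNIV. a $ k * (b \<bullet> M $ k))"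
    and "b \<bullet> (M *v a) = (\<Sum>k\<in>UNIV. (a \<bullet> M $ k) * b $ k)"
    by (simp_all add: inner_vec_def[of _ "M *v _"] matrix_vector_mul_component inner_commute mult.commute)
  then have "(\<Sum>k\<in>UNIV. (a \<bullet> b) * (axis k 1 \<bullet> M $ k) + (a \<bullet> axis k 1) * (b \<bullet> M $ k)
        + (a \<bullet> M $ k) * (b \<bullet> axis k 1))
      = (a \<bullet> b) * trace M + a \<bullet> (M *v b) + b \<bullet> (M *v a)"
    by (simp add: sum.distrib sum_distrib_left inner_axis inner_axis' trace_def)
  ultimately show "has_bochner_integral std_gaussian (\<lambda>z. (a \<bullet> z) * ((b \<bullet> z) * (z \<bullet> (M *v z))))
      ((a \<bullet> b) * trace M + a \<bullet> (M *v b) + b \<bullet> (M *v a))"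
    by (simp add: quadratic_form_eq_sum sum_distrib_left)
qed

lemma has_bochner_integral_std_gaussian_quadratic:
  fixes M :: "real^'n::finite^'n" and a b g :: "real^'n" and \<alpha> :: real
  assumes "transpose M = M"
  defines "F \<equiv> \<lambda>z. \<alpha> + g \<bullet> z + z \<bullet> (M *v z)"
  shows "has_bochner_integral std_gaussian F (\<alpha> + trace M)"
    and "has_bochner_integral std_gaussian (\<lambda>z. (a \<bullet> z) * F z) (a \<bullet> g)"
    and "has_bochner_integral std_gaussian (\<lambda>z. (a \<bullet> z) * ((b \<bullet> z) * F z))
      ((a \<bullet> b) * (\<alpha> + trace M) + 2 * (a \<bullet> (M *v b)))"
proof -
  have const: "has_bochner_integral std_gaussian (\<lambda>z. \<alpha>) \<alpha>"
    using has_bochner_integral_mult_left[OF std_gaussian_coordinate_moments(1), of \<alpha>] by simp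
  note moments = const has_bochner_integral_std_gaussian_inner1 has_bochner_integral_std_gaussian_inner2
    has_bochner_integral_std_gaussian_inner3 has_bochner_integral_std_gaussian_quadratic_form
  have "has_bochner_integral std_gaussian (\<lambda>z. \<alpha> + g \<bullet> z + z \<bullet> (M *v z)) (\<alpha> + 0 + trace M)"
    by (intro has_bochner_integral_add moments)
  then show "has_bochner_integral std_gaussian F (\<alpha> + trace M)"
    by (simp add: F_def)
  have "has_bochner_integral std_gaussian
      (\<lambda>z. (a \<bullet> z) * \<alpha> + (a \<bullet> z) * (g \<bullet> z) + (a \<bullet> z) * (z \<bullet> (M *v z))) (0 * \<alpha> + a \<bullet> g + 0)"
    by (intro has_bochner_integral_add has_bochner_integral_mult_left moments)
  then show "has_bochner_integral std_gaussian (\<lambda>z. (a \<bullet> z) * F z) (a \<bullet> g)"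
    by (simp add: F_def distrib_left)
  have "has_bochner_integral std_gaussian
      (\<lambda>z. (a \<bullet> z) * (b \<bullet> z) * \<alpha> + (a \<bullet> z) * ((b \<bullet> z) * (g \<bullet> z)) + (a \<bullet> z) * ((b \<bullet> z) * (z \<bullet> (M *v z))))
      ((a \<bullet> b) * \<alpha> + 0 + ((a \<bullet> b) * trace M + a \<bullet> (M *v b) + b \<bullet> (M *v a)))"
    by (intro has_bochner_integral_add has_bochner_integral_mult_left moments)
  then show "has_bochner_integral std_gaussian (\<lambda>z. (a \<bullet> z) * ((b \<bullet> z) * F z))
      ((a \<bullet> b) * (\<alpha> + trace M) + 2 * (a \<bullet> (M *v b)))"
    using symmetric_matrix_inner_commute[OF assms(1), of b a]
    by (simp add: F_def distrib_left algebra_simps)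
qed

section \<open>Gaussian expectations of quadratic functions\<close>

lemma has_bochner_integral_std_gaussian_affine_quadratic:
  fixes A S :: "real^'n::finite^'n" and b m :: "real^'n" and c :: real
  assumes "transpose A = A" and q: "\<And>x. q x = x \<bullet> (A *v x) + b \<bullet> x + c"
  defines "C \<equiv> S ** transpose S" and "g \<equiv> 2 *\<^sub>R (A *v m) + b"
    and "\<mu> \<equiv> q m + trace (transpose S ** A ** S)"
  shows "has_bochner_integral std_gaussian (\<lambda>z. q (m + S *v z)) \<mu>"
    and "has_bochner_integral std_gaussian (\<lambda>z. (m + S *v z) $ i * q (m + S *v z))
      (m $ i * \<mu> + (C *v g) $ i)"
    and "has_bochner_integral std_gaussian (\<lambda>z. (m + S *v z) $ i * (m + S *v z) $ j * q (m + S *v z))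
      ((m $ i * m $ j + C $ i $ j) * \<mu> + m $ i * (C *v g) $ j + m $ j * (C *v g) $ i + 2 * (C ** A ** C) $ i $ j)"
proof -
  define M where "M = transpose S ** A ** S"
  define F where "F z = q m + (g v* S) \<bullet> z + z \<bullet> (M *v z)" for z
  define e where "e k = axis k 1 v* S" for k
  have "transpose M = M"
    using assms(1) by (simp add: M_def matrix_transpose_mul matrix_mul_assoc)
  note F_moments = has_bochner_integral_std_gaussian_quadratic[OF this, where \<alpha> = "q m" and g = "g v* S",
      folded F_def]
  have shift: "q (m + S *v z) = F z" for z
    by (simp add: q F_def g_def M_def quadratic_shift[OF assms(1)] dot_lmul_matrix quadratic_form_congruence)
  have coord: "(S *v z) $ k = e k \<bullet> z" for z k
    by (simp add: e_def matrix_vector_mult_nth_eq_inner)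
  have e_inner: "e k \<bullet> (u v* S) = (C *v u) $ k" for k u
    by (simp add: e_def C_def inner_vector_matrix_mult inner_axis')
  have M_e: "M *v w = (A *v (S *v w)) v* S" for w
    by (simp add: M_def matrix_vector_mul_assoc[symmetric])
  have S_e: "S *v e j = C *v axis j 1" for j
    by (simp add: e_def C_def matrix_vector_mult_vector_matrix_mult)
  have e_e: "e i \<bullet> e j = C $ i $ j" for i j
    by (simp add: e_def C_def inner_vector_matrix_mult inner_axis' matrix_vector_mult_axis_nth)
  have CAC: "e i \<bullet> (M *v e j) = (C ** A ** C) $ i $ j"
    by (simp add: M_e e_inner S_e matrix_vector_mul_assoc matrix_mul_assoc matrix_vector_mult_axis_nth)
  have \<mu>: "\<mu> = q m + trace M"
    by (simp add: \<mu>_def M_def)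
  show "has_bochner_integral std_gaussian (\<lambda>z. q (m + S *v z)) \<mu>"
    using F_moments(1) by (simp add: shift \<mu>)
  have "has_bochner_integral std_gaussian (\<lambda>z. m $ i * F z + (e i \<bullet> z) * F z)
      (m $ i * (q m + trace M) + e i \<bullet> (g v* S))"
    by (intro has_bochner_integral_add has_bochner_integral_mult_right F_moments)
  then show "has_bochner_integral std_gaussian (\<lambda>z. (m + S *v z) $ i * q (m + S *v z))
      (m $ i * \<mu> + (C *v g) $ i)"
    by (simp add: shift coord e_inner \<mu> distrib_right)
  have "has_bochner_integral std_gaussian
      (\<lambda>z. m $ i * m $ j * F z + m $ i * ((e j \<bullet> z) * F z) + m $ j * ((e i \<bullet> z) * F z)
        + (e i \<bullet> z) * ((e j \<bullet> z) * F z))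
      (m $ i * m $ j * (q m + trace M) + m $ i * (e j \<bullet> (g v* S)) + m $ j * (e i \<bullet> (g v* S))
        + ((e i \<bullet> e j) * (q m + trace M) + 2 * (e i \<bullet> (M *v e j))))"
    by (intro has_bochner_integral_add has_bochner_integral_mult_right F_moments)
  then show "has_bochner_integral std_gaussian (\<lambda>z. (m + S *v z) $ i * (m + S *v z) $ j * q (m + S *v z))
      ((m $ i * m $ j + C $ i $ j) * \<mu> + m $ i * (C *v g) $ j + m $ j * (C *v g) $ i + 2 * (C ** A ** C) $ i $ j)"
    by (simp add: shift coord e_inner e_e CAC \<mu> algebra_simps)
qed

lemma gexp_eqI:
  fixes C :: "real^'n::finite^'n"
  assumes "h \<in> borel_measurable borel"
    and "has_bochner_integral std_gaussian (\<lambda>z. h (m + (SOME S :: real^'n^'n. S ** transpose S = C) *v z)) v"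
  shows "gexp m C h = v"
proof -
  have "(\<lambda>z. m + (SOME S :: real^'n^'n. S ** transpose S = C) *v z) \<in> measurable std_gaussian borel"
    unfolding std_gaussian_def by (simp add: borel_measurable_continuous_onI continuous_intros)
  then show ?thesis
    using assms unfolding gexp_def gaussian_def
    by (intro has_bochner_integral_integral_eq has_bochner_integral_distr)
qed

lemma gexp_quadratic_moments:
  fixes A C :: "real^'n::finite^'n" and b m :: "real^'n" and c :: real
  assumes "transpose A = A" and "psd C" and f: "\<And>x. f x = x \<bullet> (A *v x) + b \<bullet> x + c"
  defines "g \<equiv> 2 *\<^sub>R (A *v m) + b"
  shows "gexp m C (\<lambda>x. x $ i * f x) = m $ i * gexp m C f + (C *v g) $ i"
    and "gexp m C (\<lambda>x. x $ i * x $ j * f x) = (m $ i * m $ j + C $ i $ j) * gexp m C f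
      + m $ i * (C *v g) $ j + m $ j * (C *v g) $ i + 2 * (C ** A ** C) $ i $ j"
proof -
  define S where "S = (SOME S :: real^'n^'n. S ** transpose S = C)"
  have "S ** transpose S = C"
    unfolding S_def using psd_imp_gram_factorization[OF assms(2)] by (rule someI_ex)
  define \<mu> where "\<mu> = f m + trace (transpose S ** A ** S)"
  note moments = has_bochner_integral_std_gaussian_affine_quadratic[OF assms(1) f, where S = S and m = m,
      folded \<mu>_def g_def, unfolded \<open>S ** transpose S = C\<close>]
  have f_eq: "f = (\<lambda>x. x \<bullet> (A *v x) + b \<bullet> x + c)"
    using f by (rule ext)
  have "f \<in> borel_measurable borel" and "(\<lambda>x. x $ i * f x) \<in> borel_measurable borel"
    and "(\<lambda>x. x $ i * x $ j * f x) \<in> borel_measurable borel"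
    by (simp_all add: f_eq borel_measurable_continuous_onI continuous_intros)
  note gexp = this[THEN gexp_eqI]
  have "gexp m C f = \<mu>"
    using moments(1) unfolding S_def by (rule gexp(1))
  moreover have "gexp m C (\<lambda>x. x $ i * f x) = m $ i * \<mu> + (C *v g) $ i"
    using moments(2) unfolding S_def by (rule gexp(2))
  moreover have "gexp m C (\<lambda>x. x $ i * x $ j * f x) = (m $ i * m $ j + C $ i $ j) * \<mu>
      + m $ i * (C *v g) $ j + m $ j * (C *v g) $ i + 2 * (C ** A ** C) $ i $ j"
    using moments(3) unfolding S_def by (rule gexp(3))
  ultimately show "gexp m C (\<lambda>x. x $ i * f x) = m $ i * gexp m C f + (C *v g) $ i"
    and "gexp m C (\<lambda>x. x $ i * x $ j * f x) = (m $ i * m $ j + C $ i $ j) * gexp m C f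
      + m $ i * (C *v g) $ j + m $ j * (C *v g) $ i + 2 * (C ** A ** C) $ i $ j"
    by simp_all
qed

theorem theorem2:
  fixes A :: "real^'n^'n" and b :: "real^'n" and c :: real
    and f :: "real^'n \<Rightarrow> real" and m :: "real^'n" and C :: "real^'n^'n"
  assumes "transpose A = A"
    and "\<And>x. f x = x \<bullet> (A *v x) + b \<bullet> x + c"
    and "psd C"
  shows "agrf_m_rhs f m C = - (2 *\<^sub>R (C *v (A *v m))) - C *v b
       \<and> agrf_C_rhs f m C = - (2 *\<^sub>R (C ** A ** C))"
  using gexp_quadratic_moments[OF assms(1,3,2)]
  by (simp add: agrf_m_rhs_def agrf_C_rhs_def vec_eq_iff matrix_vector_right_distrib algebra_simps)

end
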